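(* Let $X$, $Y$ be real Banach spaces, $\Omega$ a measure space, $Z:=L^2(\Omega)$, and $e:Y\to Z$ a linear continuous dense embedding. Let $f:X\to\mathbb{R}$ and $g:X\to Y$ be continuously Fréchet differentiable. Let $(x^k)$ be generated by the augmented Lagrangian algorithm described in the context, where in Step 2 the iterate $x^{k+1}$ is chosen such that $L_{\rho_k}'(x^{k+1},w^k)\to 0$ in $X^*$ as $k\to\infty$ (derivative with respect to $x$). If $\bar x$ is a (strong) limit point of $(x^k)$, then $D\|g_+(\bar x)\|_Z^2=2g'(\bar x)^*g_+(\bar x)=0$, i.e. $\bar x$ is a stationary point of $x\mapsto\|g_+(x)\|_Z^2$.
   Context: The order on $Y$ is induced by $Z$ via $e$ (pointwise a.e.). For $z\in Z$, $z_+:=\max\{z,0\}$ pointwise; $g_+(x):=(e(g(x)))_+$; $\min$ in $Z$ is pointwise; $g'(x)^*$ denotes the adjoint of $e\circ g'(x):X\to Z$ with $Z\cong Z^*$. The augmented Lagrangian is $L_\rho(x,\lambda):=f(x)+\frac{\rho}{2}\|(g(x)+\lambda/\rho)_+\|_Z^2$, whose $x$-derivative is $f'(x)+g'(x)^*(\lambda+\rho g(x))_+$. Algorithm: (S.0) Choose $(x^0,\lambda^0)\in X\times Z$, $\rho_0>0$, $w^{\max}\in Z$ with $w^{\max}\ge 0$, $\gamma>1$, $\tau\in(0,1)$; $k=0$. (S.2) Choose $w^k\in Z$ with $0\le w^k\le w^{\max}$ a.e. and compute an approximate minimizer $x^{k+1}$ of $L_{\rho_k}(\cdot,w^k)$.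 (S.3) Set $\lambda^{k+1}:=(w^k+\rho_k g(x^{k+1}))_+$. If $k=0$ or $\|\min\{-g(x^{k+1}),w^k/\rho_k\}\|_Z\le\tau\|\min\{-g(x^k),w^{k-1}/\rho_{k-1}\}\|_Z$, set $\rho_{k+1}:=\rho_k$; else $\rho_{k+1}:=\gamma\rho_k$. (S.4) $k\leftarrow k+1$, go to (S.2). The algorithm is run without stopping. *)

theory Defs
  imports "HOL-Probability.Probability"
begin

text \<open>Z = L^2(Omega), represented by square-integrable real functions on the
  measure space M (elements identified up to M-a.e. equality where relevant).\<close>

definition L2 :: "'w measure \<Rightarrow> ('w \<Rightarrow> real) set" where
  "L2 M = {z. z \<in> borel_measurable M \<and> integrable M (\<lambda>\<omega>. (z \<omega>)\<^sup>2)}"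

definition L2norm :: "'w measure \<Rightarrow> ('w \<Rightarrow> real) \<Rightarrow> real" where
  "L2norm M z = sqrt (\<integral>\<omega>. (z \<omega>)\<^sup>2 \<partial>M)"

definition dense_embedding :: "'w measure \<Rightarrow> ('y::real_normed_vector \<Rightarrow> ('w \<Rightarrow> real)) \<Rightarrow> bool" where
  "dense_embedding M e \<longleftrightarrow>
     (\<forall>y. e y \<in> L2 M) \<and>
     (\<forall>a b. AE \<omega> in M. e (a + b) \<omega> = e a \<omega> + e b \<omega>) \<and>
     (\<forall>c a. AE \<omega> in M. e (c *\<^sub>R a) \<omega> = c * e a \<omega>) \<and>
     (\<exists>C. \<forall>y. L2norm M (e y) \<le> C * norm y) \<and>
     (\<forall>y. (AE \<omega> in M. e y \<omega> = 0) \<longrightarrow> y = 0) \<and>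
     (\<forall>z \<in> L2 M. \<forall>\<epsilon>>0. \<exists>y. L2norm M (\<lambda>\<omega>. e y \<omega> - z \<omega>) < \<epsilon>)"

definition gplus :: "('y \<Rightarrow> ('w \<Rightarrow> real)) \<Rightarrow> ('x \<Rightarrow> 'y) \<Rightarrow> 'x \<Rightarrow> 'w \<Rightarrow> real" where
  "gplus e g x = (\<lambda>\<omega>. max 0 (e (g x) \<omega>))"

text \<open>(g'(x)^* z)(h) = <z, e(g'(x) h)>_Z.\<close>
definition adj_apply :: "'w measure \<Rightarrow> ('y \<Rightarrow> ('w \<Rightarrow> real)) \<Rightarrow> ('x::real_normed_vector \<Rightarrow>\<^sub>L 'y::real_normed_vector)
    \<Rightarrow> ('w \<Rightarrow> real) \<Rightarrow> 'x \<Rightarrow> real" where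
  "adj_apply M e A z h = (\<integral>\<omega>. z \<omega> * e (blinfun_apply A h) \<omega> \<partial>M)"

text \<open>x-derivative of the augmented Lagrangian L_rho(x, lambda), applied to h:
  f'(x) h + (g'(x)^* (lambda + rho g(x))_+)(h).\<close>
definition AL_deriv :: "'w measure \<Rightarrow> ('y::real_normed_vector \<Rightarrow> ('w \<Rightarrow> real)) \<Rightarrow> ('x::real_normed_vector \<Rightarrow> 'x \<Rightarrow>\<^sub>L real)
    \<Rightarrow> ('x \<Rightarrow> 'y) \<Rightarrow> ('x \<Rightarrow> 'x \<Rightarrow>\<^sub>L 'y) \<Rightarrow> real \<Rightarrow> 'x \<Rightarrow> ('w \<Rightarrow> real) \<Rightarrow> 'x \<Rightarrow> real" where
  "AL_deriv M e f' g g' \<rho> x lam h =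
     blinfun_apply (f' x) h + adj_apply M e (g' x) (\<lambda>\<omega>. max 0 (lam \<omega> + \<rho> * e (g x) \<omega>)) h"

definition dual_norm :: "('x::real_normed_vector \<Rightarrow> real) \<Rightarrow> real" where
  "dual_norm \<phi> = Sup {\<bar>\<phi> h\<bar> | h. norm h \<le> 1}"

end

(*
  Write Phi(u) = ||g_+(u)||^2. The remainder of s |-> (max 0 s)^2 at s with increment t is
  bounded by t^2, so Phi is Frechet differentiable with derivative 2 g'(u)^* g_+(u).

  The penalty parameters either become constant or tend to infinity. If they become constant,
  the safeguard test succeeds at every late step, so the residual ||min{-g(x^k), w^(k-1)/rho_(k-1)}||
  decays geometrically; since w >= 0 it dominates ||g_+(x^k)||, hence g_+(xbar) = 0.
  If they tend to infinity, divide L'_rho_k(x^(k+1), w^k) -> 0 by rho_k: the f'-term vanishes,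
  and as w^k is bounded, (w^k/rho_k + g(x^(k+1)))_+ -> g_+(xbar) in L^2, so that
  g'(xbar)^* g_+(xbar) = 0 in the limit.
*)

theory Submission
  imports Defs
begin

section \<open>Square-integrable functions\<close>

lemma L2_measurable: "z \<in> L2 M \<Longrightarrow> z \<in> borel_measurable M"
  and L2_integrable_square: "z \<in> L2 M \<Longrightarrow> integrable M (\<lambda>\<omega>. (z \<omega>)\<^sup>2)"
  by (auto simp: L2_def)

lemma L2_dominated:
  assumes "a \<in> L2 M" "z \<in> borel_measurable M" "AE \<omega> in M. \<bar>z \<omega>\<bar> \<le> \<bar>a \<omega>\<bar>"
  shows "z \<in> L2 M"
proof -
  have "integrable M (\<lambda>\<omega>. (z \<omega>)\<^sup>2)"
    by (rule Bochner_Integration.integrable_bound[OF L2_integrable_square[OF assms(1)]])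
       (use assms(2,3) in \<open>auto simp: abs_le_square_iff\<close>)
  with assms(2) show ?thesis by (simp add: L2_def)
qed

lemma L2_mult_integrable:
  assumes "a \<in> L2 M" "b \<in> L2 M"
  shows "integrable M (\<lambda>\<omega>. a \<omega> * b \<omega>)"
proof (rule Bochner_Integration.integrable_bound)
  show "integrable M (\<lambda>\<omega>. (a \<omega>)\<^sup>2 + (b \<omega>)\<^sup>2)"
    using assms by (intro Bochner_Integration.integrable_add L2_integrable_square)
  show "(\<lambda>\<omega>. a \<omega> * b \<omega>) \<in> borel_measurable M"
    using assms by (intro borel_measurable_times L2_measurable)
  have "\<bar>u * v\<bar> \<le> u\<^sup>2 + v\<^sup>2" for u v :: real
  proof -
    have "0 \<le> (\<bar>u\<bar> - \<bar>v\<bar>)\<^sup>2" by simp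
    then have "2 * (\<bar>u\<bar> * \<bar>v\<bar>) \<le> u\<^sup>2 + v\<^sup>2" by (simp add: power2_eq_square algebra_simps)
    moreover have "0 \<le> \<bar>u\<bar> * \<bar>v\<bar>" by simp
    ultimately show ?thesis unfolding abs_mult by linarith
  qed
  then show "AE \<omega> in M. norm (a \<omega> * b \<omega>) \<le> norm ((a \<omega>)\<^sup>2 + (b \<omega>)\<^sup>2)"
    by simp
qed

lemma L2_add: "a \<in> L2 M \<Longrightarrow> b \<in> L2 M \<Longrightarrow> (\<lambda>\<omega>. a \<omega> + b \<omega>) \<in> L2 M"
  by (auto simp: L2_def power2_sum intro!: L2_mult_integrable)

lemma L2_mult: "a \<in> L2 M \<Longrightarrow> (\<lambda>\<omega>. c * a \<omega>) \<in> L2 M"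
  by (auto simp: L2_def power_mult_distrib)

lemma L2_diff: "a \<in> L2 M \<Longrightarrow> b \<in> L2 M \<Longrightarrow> (\<lambda>\<omega>. a \<omega> - b \<omega>) \<in> L2 M"
  using L2_add[OF _ L2_mult[of b M "-1"]] by simp

lemma L2_divide: "a \<in> L2 M \<Longrightarrow> (\<lambda>\<omega>. a \<omega> / c) \<in> L2 M"
  using L2_mult[of a M "inverse c"] by (simp add: field_simps)

lemma L2_max_0: "a \<in> L2 M \<Longrightarrow> (\<lambda>\<omega>. max 0 (a \<omega>)) \<in> L2 M"
  by (rule L2_dominated) (auto dest: L2_measurable)

lemma L2_abs: "z \<in> L2 M \<Longrightarrow> (\<lambda>\<omega>. \<bar>z \<omega>\<bar>) \<in> L2 M"
  by (rule L2_dominated) (auto intro: L2_measurable borel_measurable_abs)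

lemma L2_min:
  assumes "a \<in> L2 M" "b \<in> L2 M"
  shows "(\<lambda>\<omega>. min (a \<omega>) (b \<omega>)) \<in> L2 M"
proof (rule L2_dominated)
  show "(\<lambda>\<omega>. \<bar>a \<omega>\<bar> + \<bar>b \<omega>\<bar>) \<in> L2 M"
    using assms by (intro L2_add L2_abs)
qed (use assms in \<open>auto intro: borel_measurable_min L2_measurable\<close>)

lemma L2norm_nonneg: "0 \<le> L2norm M z"
  by (simp add: L2norm_def)

lemma L2norm_square: "(L2norm M z)\<^sup>2 = (\<integral>\<omega>. (z \<omega>)\<^sup>2 \<partial>M)"
  by (simp add: L2norm_def)

lemma L2norm_eq_0_iff: "z \<in> L2 M \<Longrightarrow> L2norm M z = 0 \<longleftrightarrow> (AE \<omega> in M. z \<omega> = 0)"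
  by (simp add: L2norm_def integral_nonneg_eq_0_iff_AE L2_integrable_square)

lemma L2norm_cong_AE:
  "a \<in> borel_measurable M \<Longrightarrow> b \<in> borel_measurable M \<Longrightarrow> AE \<omega> in M. a \<omega> = b \<omega>
    \<Longrightarrow> L2norm M a = L2norm M b"
  unfolding L2norm_def by (intro arg_cong[where f=sqrt] integral_cong_AE) auto

lemma L2norm_mono:
  assumes "b \<in> L2 M" "a \<in> borel_measurable M" "AE \<omega> in M. \<bar>a \<omega>\<bar> \<le> \<bar>b \<omega>\<bar>"
  shows "L2norm M a \<le> L2norm M b"
  unfolding L2norm_def
proof (intro real_sqrt_le_mono integral_mono_AE)
  show "integrable M (\<lambda>\<omega>. (a \<omega>)\<^sup>2)" "integrable M (\<lambda>\<omega>. (b \<omega>)\<^sup>2)"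
    using assms L2_dominated by (auto intro: L2_integrable_square)
  show "AE \<omega> in M. (a \<omega>)\<^sup>2 \<le> (b \<omega>)\<^sup>2"
    using assms(3) by (simp add: abs_le_square_iff)
qed

lemma L2norm_mult: "L2norm M (\<lambda>\<omega>. c * z \<omega>) = \<bar>c\<bar> * L2norm M z"
  by (simp add: L2norm_def power_mult_distrib real_sqrt_mult)

lemma L2_Cauchy_Schwarz:
  assumes "a \<in> L2 M" "b \<in> L2 M"
  shows "\<bar>\<integral>\<omega>. a \<omega> * b \<omega> \<partial>M\<bar> \<le> L2norm M a * L2norm M b"
proof -
  have [measurable]: "a \<in> borel_measurable M" "b \<in> borel_measurable M"
    using assms by (auto intro: L2_measurable)
  have "(\<integral>\<^sup>+\<omega>. ennreal \<bar>a \<omega>\<bar> * ennreal \<bar>b \<omega>\<bar> \<partial>M) = (\<integral>\<^sup>+\<omega>. ennreal \<bar>a \<omega> * b \<omega>\<bar> \<partial>M)"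
    by (simp add: ennreal_mult abs_mult)
  also have "\<dots> = ennreal (\<integral>\<omega>. \<bar>a \<omega> * b \<omega>\<bar> \<partial>M)"
    using L2_mult_integrable[OF assms] by (intro nn_integral_eq_integral) auto
  finally have ab: "(\<integral>\<^sup>+\<omega>. ennreal \<bar>a \<omega>\<bar> * ennreal \<bar>b \<omega>\<bar> \<partial>M) = ennreal (\<integral>\<omega>. \<bar>a \<omega> * b \<omega>\<bar> \<partial>M)" .
  have sq: "(\<integral>\<^sup>+\<omega>. (ennreal \<bar>z \<omega>\<bar>)\<^sup>2 \<partial>M) = ennreal ((L2norm M z)\<^sup>2)" if "z \<in> L2 M" for z
  proof -
    have "(\<integral>\<^sup>+\<omega>. (ennreal \<bar>z \<omega>\<bar>)\<^sup>2 \<partial>M) = (\<integral>\<^sup>+\<omega>. ennreal ((z \<omega>)\<^sup>2) \<partial>M)"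
      by (simp add: ennreal_power)
    also have "\<dots> = ennreal ((L2norm M z)\<^sup>2)"
      unfolding L2norm_square using L2_integrable_square[OF that] by (intro nn_integral_eq_integral) auto
    finally show ?thesis .
  qed
  have "(\<integral>\<^sup>+\<omega>. ennreal \<bar>a \<omega>\<bar> * ennreal \<bar>b \<omega>\<bar> \<partial>M)\<^sup>2
      \<le> (\<integral>\<^sup>+\<omega>. (ennreal \<bar>a \<omega>\<bar>)\<^sup>2 \<partial>M) * (\<integral>\<^sup>+\<omega>. (ennreal \<bar>b \<omega>\<bar>)\<^sup>2 \<partial>M)"
    by (rule Cauchy_Schwarz_nn_integral) auto
  then have "ennreal ((\<integral>\<omega>. \<bar>a \<omega> * b \<omega>\<bar> \<partial>M)\<^sup>2) \<le> ennreal ((L2norm M a * L2norm M b)\<^sup>2)"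
    unfolding ab sq[OF assms(1)] sq[OF assms(2)]
    by (simp add: ennreal_power ennreal_mult power_mult_distrib)
  then have "(\<integral>\<omega>. \<bar>a \<omega> * b \<omega>\<bar> \<partial>M)\<^sup>2 \<le> (L2norm M a * L2norm M b)\<^sup>2"
    by (rule ennreal_le_iff[THEN iffD1, rotated]) simp
  then have "(\<integral>\<omega>. \<bar>a \<omega> * b \<omega>\<bar> \<partial>M) \<le> L2norm M a * L2norm M b"
    by (rule power2_le_imp_le) (simp add: L2norm_nonneg)
  then show ?thesis
    by (rule order_trans[OF integral_abs_bound])
qed

lemma L2norm_triangle:
  assumes "a \<in> L2 M" "b \<in> L2 M"
  shows "L2norm M (\<lambda>\<omega>. a \<omega> + b \<omega>) \<le> L2norm M a + L2norm M b"
proof (rule power2_le_imp_le)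
  have "(L2norm M (\<lambda>\<omega>. a \<omega> + b \<omega>))\<^sup>2 = (\<integral>\<omega>. (a \<omega>)\<^sup>2 + (b \<omega>)\<^sup>2 + 2 * (a \<omega> * b \<omega>) \<partial>M)"
    unfolding L2norm_square by (simp add: power2_sum algebra_simps)
  also have "\<dots> = (L2norm M a)\<^sup>2 + (L2norm M b)\<^sup>2 + 2 * (\<integral>\<omega>. a \<omega> * b \<omega> \<partial>M)"
    unfolding L2norm_square
    using L2_integrable_square[OF assms(1)] L2_integrable_square[OF assms(2)] L2_mult_integrable[OF assms]
    by simp
  also have "\<dots> \<le> (L2norm M a + L2norm M b)\<^sup>2"
    using L2_Cauchy_Schwarz[OF assms] abs_ge_self[of "\<integral>\<omega>. a \<omega> * b \<omega> \<partial>M"]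
    by (simp add: power2_sum)
  finally show "(L2norm M (\<lambda>\<omega>. a \<omega> + b \<omega>))\<^sup>2 \<le> (L2norm M a + L2norm M b)\<^sup>2" .
qed (simp add: L2norm_nonneg)

lemma L2norm_abs: "L2norm M (\<lambda>\<omega>. \<bar>z \<omega>\<bar>) = L2norm M z"
  unfolding L2norm_def power2_abs ..

lemma L2norm_max_0_le_L2norm_min:
  assumes "z \<in> L2 M" "v \<in> L2 M" "AE \<omega> in M. 0 \<le> v \<omega>"
  shows "L2norm M (\<lambda>\<omega>. max 0 (z \<omega>)) \<le> L2norm M (\<lambda>\<omega>. min (- z \<omega>) (v \<omega>))"
  using assms(3)
  by (intro L2norm_mono L2_min L2_mult[of z M "-1", simplified] assms(1,2)
      borel_measurable_max L2_measurable[OF assms(1)]) (auto elim!: AE_mp)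

lemma max_0_square_expansion_le:
  fixes s t :: real
  shows "\<bar>(max 0 (s + t))\<^sup>2 - (max 0 s)\<^sup>2 - 2 * (max 0 s * t)\<bar> \<le> t\<^sup>2"
proof (cases "0 \<le> s"; cases "0 \<le> s + t")
  assume "0 \<le> s" "\<not> 0 \<le> s + t"
  then have "(s + t)\<^sup>2 \<le> t\<^sup>2"
    by (intro abs_le_square_iff[THEN iffD1]) auto
  then show ?thesis
    using \<open>0 \<le> s\<close> \<open>\<not> 0 \<le> s + t\<close> zero_le_power2[of "s + t"]
    by (simp add: power2_eq_square algebra_simps)
next
  assume "\<not> 0 \<le> s" "0 \<le> s + t"
  then have "(s + t)\<^sup>2 \<le> t\<^sup>2"
    by (intro abs_le_square_iff[THEN iffD1]) auto
  then show ?thesis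
    using \<open>\<not> 0 \<le> s\<close> \<open>0 \<le> s + t\<close> by simp
qed (simp_all add: power2_eq_square algebra_simps)

lemma L2norm_max_0_square_expansion_le:
  assumes s: "s \<in> L2 M" and t: "t \<in> L2 M"
  shows "\<bar>(L2norm M (\<lambda>\<omega>. max 0 (s \<omega> + t \<omega>)))\<^sup>2 - (L2norm M (\<lambda>\<omega>. max 0 (s \<omega>)))\<^sup>2
      - 2 * (\<integral>\<omega>. max 0 (s \<omega>) * t \<omega> \<partial>M)\<bar> \<le> (L2norm M t)\<^sup>2"
proof -
  define F where "F \<omega> = (max 0 (s \<omega> + t \<omega>))\<^sup>2 - (max 0 (s \<omega>))\<^sup>2 - 2 * (max 0 (s \<omega>) * t \<omega>)" for \<omega>
  have s_plus: "(\<lambda>\<omega>. max 0 (s \<omega>)) \<in> L2 M" and st_plus: "(\<lambda>\<omega>. max 0 (s \<omega> + t \<omega>)) \<in> L2 M"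
    using s t by (auto intro: L2_max_0 L2_add)
  have "integrable M F"
    unfolding F_def using s_plus st_plus L2_mult_integrable[OF s_plus t]
    by (intro Bochner_Integration.integrable_diff integrable_mult_right L2_integrable_square)
  then have "(L2norm M (\<lambda>\<omega>. max 0 (s \<omega> + t \<omega>)))\<^sup>2 - (L2norm M (\<lambda>\<omega>. max 0 (s \<omega>)))\<^sup>2
      - 2 * (\<integral>\<omega>. max 0 (s \<omega>) * t \<omega> \<partial>M) = (\<integral>\<omega>. F \<omega> \<partial>M)"
    unfolding F_def L2norm_square using s_plus st_plus L2_mult_integrable[OF s_plus t]
    by (simp add: L2_integrable_square)
  also have "\<bar>\<dots>\<bar> \<le> (\<integral>\<omega>. \<bar>F \<omega>\<bar> \<partial>M)"
    by (rule integral_abs_bound)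
  also have "\<dots> \<le> (\<integral>\<omega>. (t \<omega>)\<^sup>2 \<partial>M)"
    using integrable_abs[OF \<open>integrable M F\<close>] L2_integrable_square[OF t]
    by (intro integral_mono) (auto simp: F_def max_0_square_expansion_le)
  finally show ?thesis
    by (simp add: L2norm_square)
qed

lemma L2norm_divide_tendsto_0:
  assumes wmax: "wmax \<in> L2 M" and w: "\<And>j. w j \<in> borel_measurable M"
    and w_bound: "\<And>j. AE \<omega> in M. 0 \<le> w j \<omega> \<and> w j \<omega> \<le> wmax \<omega>"
    and c: "\<And>j. 0 < c j" and inv_c: "(\<lambda>j. inverse (c j)) \<longlonglongrightarrow> 0"
  shows "(\<lambda>j. L2norm M (\<lambda>\<omega>. w j \<omega> / c j)) \<longlonglongrightarrow> 0"
proof (rule Lim_null_comparison)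
  have "L2norm M (\<lambda>\<omega>. w j \<omega> / c j) \<le> L2norm M (\<lambda>\<omega>. inverse (c j) * wmax \<omega>)" for j
  proof (rule L2norm_mono)
    show "(\<lambda>\<omega>. inverse (c j) * wmax \<omega>) \<in> L2 M"
      by (rule L2_mult[OF wmax])
    show "(\<lambda>\<omega>. w j \<omega> / c j) \<in> borel_measurable M"
      by (intro borel_measurable_divide borel_measurable_const w)
    show "AE \<omega> in M. \<bar>w j \<omega> / c j\<bar> \<le> \<bar>inverse (c j) * wmax \<omega>\<bar>"
      using w_bound[of j]
    proof eventually_elim
      case (elim \<omega>)
      then have "w j \<omega> / c j \<le> wmax \<omega> / c j"
        using c[of j] by (simp add: divide_right_mono)
      then show ?case
        using elim c[of j] by (simp add: divide_inverse mult.commute)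
    qed
  qed
  note w_c = this
  have "L2norm M (\<lambda>\<omega>. w j \<omega> / c j) \<le> inverse (c j) * L2norm M wmax" for j
    using w_c[of j] c[of j] by (simp add: L2norm_mult)
  then show "\<forall>\<^sub>F j in sequentially. norm (L2norm M (\<lambda>\<omega>. w j \<omega> / c j)) \<le> inverse (c j) * L2norm M wmax"
    by (simp add: L2norm_nonneg always_eventually)
  show "(\<lambda>j. inverse (c j) * L2norm M wmax) \<longlonglongrightarrow> 0"
    using tendsto_mult_left_zero[OF inv_c] .
qed

lemma abs_le_dual_norm:
  assumes "bounded_linear \<phi>"
  shows "\<bar>\<phi> h\<bar> \<le> dual_norm \<phi> * norm h"
proof (cases "h = 0")
  case True
  then show ?thesis
    using linear_0[OF bounded_linear.linear[OF assms]] by simp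
next
  case False
  obtain K where "0 < K" and K: "\<And>x. norm (\<phi> x) \<le> norm x * K"
    using bounded_linear.pos_bounded[OF assms] by blast
  have "bdd_above {\<bar>\<phi> x\<bar> | x. norm x \<le> 1}"
  proof (rule bdd_aboveI)
    fix y assume "y \<in> {\<bar>\<phi> x\<bar> | x. norm x \<le> 1}"
    then obtain x where "y = \<bar>\<phi> x\<bar>" "norm x \<le> 1"
      by blast
    then show "y \<le> K"
      using K[of x] mult_right_mono[OF \<open>norm x \<le> 1\<close> less_imp_le[OF \<open>0 < K\<close>]] by simp
  qed
  then have "\<bar>\<phi> (h /\<^sub>R norm h)\<bar> \<le> dual_norm \<phi>"
    unfolding dual_norm_def using False by (intro cSup_upper) auto
  moreover have "\<phi> h = norm h * \<phi> (h /\<^sub>R norm h)"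
    using False linear_scale[OF bounded_linear.linear[OF assms], of "norm h" "h /\<^sub>R norm h"] by simp
  ultimately show ?thesis
    by (simp add: abs_mult mult.commute[of _ "norm h"] mult_left_mono)
qed

lemma tendsto_0_if_dual_norm_tendsto_0:
  assumes "\<And>k. bounded_linear (\<phi> k)" and "(\<lambda>k. dual_norm (\<phi> k)) \<longlonglongrightarrow> 0"
  shows "(\<lambda>k. \<phi> k h) \<longlonglongrightarrow> 0"
proof (rule Lim_null_comparison)
  show "\<forall>\<^sub>F k in sequentially. norm (\<phi> k h) \<le> dual_norm (\<phi> k) * norm h"
    using abs_le_dual_norm[OF assms(1)] by (simp add: always_eventually)
  show "(\<lambda>k. dual_norm (\<phi> k) * norm h) \<longlonglongrightarrow> 0"
    using tendsto_mult_left_zero[OF assms(2)] .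
qed

lemma has_derivative_at_if_remainder_le:
  assumes "bounded_linear L"
    and "\<And>h. norm (F (u + h) - F u - L h) \<le> R h"
    and "((\<lambda>h. R h / norm h) \<longlongrightarrow> 0) (at 0)"
  shows "(F has_derivative L) (at u)"
  unfolding has_derivative_at
proof
  show "((\<lambda>h. norm (F (u + h) - F u - L h) / norm h) \<longlongrightarrow> 0) (at 0)"
    using assms(2) by (intro Lim_null_comparison[OF _ assms(3)] always_eventually allI)
      (simp add: divide_right_mono)
qed fact

lemma tendsto_0_if_eventually_contracting:
  fixes a :: "nat \<Rightarrow> 'a::banach"
  assumes "\<tau> < 1" and "\<forall>\<^sub>F k in sequentially. norm (a (Suc k)) \<le> \<tau> * norm (a k)"
  shows "a \<longlonglongrightarrow> 0"
proof -
  obtain N where "\<And>k. N \<le> k \<Longrightarrow> norm (a (Suc k)) \<le> \<tau> * norm (a k)"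
    using assms(2) by (auto simp: eventually_sequentially)
  then show ?thesis
    by (intro summable_LIMSEQ_zero summable_ratio_test[OF assms(1)])
qed

lemma penalty_pos:
  fixes \<rho> :: "nat \<Rightarrow> real"
  assumes \<rho>_0: "0 < \<rho> 0" and \<gamma>: "1 < \<gamma>" and step: "\<And>k. \<rho> (Suc k) = \<rho> k \<or> \<rho> (Suc k) = \<gamma> * \<rho> k"
  shows "0 < \<rho> k"
proof (induction k)
  case (Suc k)
  then show ?case
    using step[of k] \<gamma> mult_pos_pos[of \<gamma> "\<rho> k"] by auto
qed (rule \<rho>_0)

lemma penalty_eventually_constant_or_unbounded:
  fixes \<rho> :: "nat \<Rightarrow> real"
  assumes \<rho>_0: "0 < \<rho> 0" and \<gamma>: "1 < \<gamma>" and step: "\<And>k. \<rho> (Suc k) = \<rho> k \<or> \<rho> (Suc k) = \<gamma> * \<rho> k"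
  shows "(\<exists>K. \<forall>k\<ge>K. \<rho> (Suc k) = \<rho> k) \<or> filterlim \<rho> at_top sequentially"
proof -
  have pos: "0 < \<rho> k" for k
    using assms by (rule penalty_pos)
  have "\<rho> k \<le> \<rho> (Suc k)" for k
    using step[of k] pos[of k] \<gamma> by auto
  then have inc: "incseq \<rho>"
    by (rule incseq_SucI)
  show ?thesis
  proof (cases "bdd_above (range \<rho>)")
    case True
    txt \<open>A bounded \<open>\<rho>\<close> converges, but every \<open>\<gamma>\<close>-step increases it by at least \<open>(\<gamma> - 1) * \<rho> 0\<close>.\<close>
    then obtain B where "\<forall>k. \<rho> k \<le> B"
      by (auto simp: bdd_above_def)
    then obtain L where "\<rho> \<longlonglongrightarrow> L"
      using incseq_convergent[OF inc] by blast
    then have "(\<lambda>k. \<rho> (Suc k) - \<rho> k) \<longlonglongrightarrow> L - L"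
      by (intro tendsto_diff LIMSEQ_Suc)
    then have "\<forall>\<^sub>F k in sequentially. \<rho> (Suc k) - \<rho> k < (\<gamma> - 1) * \<rho> 0"
      using \<rho>_0 \<gamma> by (intro order_tendstoD(2)) auto
    then have "\<forall>\<^sub>F k in sequentially. \<rho> (Suc k) = \<rho> k"
    proof (rule eventually_mono)
      fix k
      assume "\<rho> (Suc k) - \<rho> k < (\<gamma> - 1) * \<rho> 0"
      moreover have "(\<gamma> - 1) * \<rho> 0 \<le> (\<gamma> - 1) * \<rho> k"
        using inc \<gamma> by (intro mult_left_mono) (auto simp: incseq_def)
      ultimately have "\<rho> (Suc k) \<noteq> \<gamma> * \<rho> k"
        by (auto simp: algebra_simps)
      then show "\<rho> (Suc k) = \<rho> k"
        using step[of k] by blast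
    qed
    then show ?thesis
      by (auto simp: eventually_sequentially)
  next
    case False
    have "\<forall>\<^sub>F k in sequentially. Z \<le> \<rho> k" for Z
    proof -
      obtain N where "Z < \<rho> N"
        using False by (meson bdd_above.I2 linorder_not_le rangeI)
      then show ?thesis
        using inc by (auto simp: eventually_sequentially incseq_def intro: order_trans[OF less_imp_le])
    qed
    then show ?thesis
      by (simp add: filterlim_at_top)
  qed
qed

lemma eventually_contracting_if_penalty_eventually_constant:
  fixes \<rho> V :: "nat \<Rightarrow> real"
  assumes update: "\<And>k. \<rho> (Suc k) = (if k = 0 \<or> V (Suc k) \<le> \<tau> * V k then \<rho> k else \<gamma> * \<rho> k)"
    and \<gamma>: "1 < \<gamma>" and pos: "\<And>k. 0 < \<rho> k" and const: "\<exists>K. \<forall>k\<ge>K. \<rho> (Suc k) = \<rho> k"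
  shows "\<forall>\<^sub>F k in sequentially. V (Suc k) \<le> \<tau> * V k"
proof -
  obtain K where K: "\<And>k. K \<le> k \<Longrightarrow> \<rho> (Suc k) = \<rho> k"
    using const by blast
  have "V (Suc k) \<le> \<tau> * V k" if "Suc K \<le> k" for k
  proof -
    have "\<rho> (Suc k) \<noteq> \<gamma> * \<rho> k"
      using K[of k] that \<gamma> pos[of k] by simp
    then show ?thesis
      using update[of k] that by (auto split: if_splits)
  qed
  then show ?thesis
    by (auto simp: eventually_sequentially)
qed

lemma limit_point_Suc:
  assumes "strict_mono r" "(x \<circ> r) \<longlonglongrightarrow> l"
  obtains s where "strict_mono s" "(\<lambda>j. x (Suc (s j))) \<longlonglongrightarrow> l"
proof
  have r_Suc: "Suc (r (Suc j) - 1) = r (Suc j)" for j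
    using strict_monoD[OF assms(1), of 0 "Suc j"] by simp
  show "strict_mono (\<lambda>j. r (Suc j) - 1)"
    unfolding strict_mono_Suc_iff using strict_monoD[OF assms(1)] r_Suc
    by (metis Suc_less_SucD lessI)
  show "(\<lambda>j. x (Suc (r (Suc j) - 1))) \<longlonglongrightarrow> l"
    unfolding r_Suc using LIMSEQ_Suc[OF assms(2)] by (simp add: o_def)
qed

section \<open>The adjoint action of a bounded map into \<open>L\<^sup>2\<close>\<close>

lemma adj_apply_mult: "adj_apply M e A (\<lambda>\<omega>. c * z \<omega>) h = c * adj_apply M e A z h"
  unfolding adj_apply_def by (simp add: mult.assoc)

lemma adj_apply_eq_0:
  assumes "z \<in> L2 M" "L2norm M z = 0"
  shows "adj_apply M e A z h = 0"
proof -
  have "AE \<omega> in M. z \<omega> * e (A h) \<omega> = 0"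
    using assms by (auto simp: L2norm_eq_0_iff)
  then show ?thesis
    unfolding adj_apply_def by (rule integral_eq_zero_AE)
qed

lemma AL_deriv_divide:
  assumes "0 < \<rho>"
  shows "AL_deriv M e f' g g' \<rho> x lam h / \<rho>
    = f' x h / \<rho> + adj_apply M e (g' x) (\<lambda>\<omega>. max 0 (lam \<omega> / \<rho> + e (g x) \<omega>)) h"
proof -
  have "max 0 (l + \<rho> * E) = \<rho> * max 0 (l / \<rho> + E)" for l E
    using assms by (simp add: max_def field_simps)
  then show ?thesis
    using assms by (simp add: AL_deriv_def adj_apply_mult add_divide_distrib)
qed

locale bounded_L2_map =
  fixes M :: "'w measure" and e :: "'y::real_normed_vector \<Rightarrow> 'w \<Rightarrow> real" and C :: real
  assumes e_L2: "e y \<in> L2 M"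
    and e_add: "AE \<omega> in M. e (a + b) \<omega> = e a \<omega> + e b \<omega>"
    and e_scaleR: "AE \<omega> in M. e (c *\<^sub>R a) \<omega> = c * e a \<omega>"
    and C_nonneg: "0 \<le> C"
    and L2norm_e_le: "L2norm M (e y) \<le> C * norm y"

lemma dense_embedding_imp_bounded_L2_map:
  assumes "dense_embedding M e"
  obtains C where "bounded_L2_map M e C"
proof -
  obtain C where C: "\<And>y. L2norm M (e y) \<le> C * norm y"
    using assms by (auto simp: dense_embedding_def)
  have "L2norm M (e y) \<le> max 0 C * norm y" for y
    using C[of y] by (rule order_trans) (simp add: mult_right_mono)
  with assms have "bounded_L2_map M e (max 0 C)"
    by unfold_locales (auto simp: dense_embedding_def)
  then show thesis ..
qed

context bounded_L2_map
begin

lemma e_measurable: "e y \<in> borel_measurable M"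
  using e_L2 by (rule L2_measurable)

lemma e_diff: "AE \<omega> in M. e (a - b) \<omega> = e a \<omega> - e b \<omega>"
  using e_add[of b "a - b"] by eventually_elim simp

lemma L2norm_e_diff_le: "L2norm M (\<lambda>\<omega>. e a \<omega> - e b \<omega>) \<le> C * norm (a - b)"
proof -
  have "L2norm M (\<lambda>\<omega>. e a \<omega> - e b \<omega>) = L2norm M (e (a - b))"
    using e_diff[of a b] by (intro L2norm_cong_AE) (auto intro: e_measurable borel_measurable_diff)
  then show ?thesis
    using L2norm_e_le by simp
qed

lemma abs_adj_apply_le:
  assumes "z \<in> L2 M"
  shows "\<bar>adj_apply M e A z h\<bar> \<le> L2norm M z * C * norm A * norm h"
proof -
  have "\<bar>adj_apply M e A z h\<bar> \<le> L2norm M z * L2norm M (e (A h))"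
    unfolding adj_apply_def by (rule L2_Cauchy_Schwarz[OF assms e_L2])
  also have "\<dots> \<le> L2norm M z * (C * (norm A * norm h))"
    using L2norm_e_le[of "A h"] norm_blinfun[of A h] C_nonneg
    by (intro mult_left_mono L2norm_nonneg) (auto intro: order_trans mult_left_mono)
  finally show ?thesis
    by (simp add: mult.assoc)
qed

lemma adj_apply_add:
  assumes "z \<in> L2 M"
  shows "adj_apply M e A z (a + b) = adj_apply M e A z a + adj_apply M e A z b"
proof -
  have "adj_apply M e A z (a + b) = (\<integral>\<omega>. z \<omega> * e (A a) \<omega> + z \<omega> * e (A b) \<omega> \<partial>M)"
    unfolding adj_apply_def blinfun.add_right
    using e_add[of "A a" "A b"] assms
    by (intro integral_cong_AE)
      (auto simp: distrib_left intro!: borel_measurable_times borel_measurable_add L2_measurable[OF assms] e_measurable)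
  then show ?thesis
    using L2_mult_integrable[OF assms e_L2] by (simp add: adj_apply_def)
qed

lemma adj_apply_scaleR:
  assumes "z \<in> L2 M"
  shows "adj_apply M e A z (c *\<^sub>R a) = c * adj_apply M e A z a"
proof -
  have "adj_apply M e A z (c *\<^sub>R a) = (\<integral>\<omega>. c * (z \<omega> * e (A a) \<omega>) \<partial>M)"
    unfolding adj_apply_def blinfun.scaleR_right
    using e_scaleR[of c "A a"] assms
    by (intro integral_cong_AE) (auto intro!: borel_measurable_times L2_measurable[OF assms] e_measurable)
  then show ?thesis
    by (simp add: adj_apply_def)
qed

lemma bounded_linear_adj_apply:
  assumes "z \<in> L2 M"
  shows "bounded_linear (adj_apply M e A z)"
proof (rule bounded_linear_intro)
  show "\<And>a b. adj_apply M e A z (a + b) = adj_apply M e A z a + adj_apply M e A z b"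
    using assms by (rule adj_apply_add)
  show "\<And>c a. adj_apply M e A z (c *\<^sub>R a) = c *\<^sub>R adj_apply M e A z a"
    using assms by (simp add: adj_apply_scaleR)
  show "\<And>h. norm (adj_apply M e A z h) \<le> norm h * (L2norm M z * C * norm A)"
    using abs_adj_apply_le[OF assms] by (simp add: mult_ac)
qed

lemma adj_apply_diff_left:
  assumes "z \<in> L2 M" "z' \<in> L2 M"
  shows "adj_apply M e A (\<lambda>\<omega>. z \<omega> - z' \<omega>) h = adj_apply M e A z h - adj_apply M e A z' h"
  unfolding adj_apply_def using L2_mult_integrable[OF assms(1) e_L2] L2_mult_integrable[OF assms(2) e_L2]
  by (simp add: left_diff_distrib)

lemma adj_apply_diff_right:
  assumes "z \<in> L2 M"
  shows "adj_apply M e (A - B) z h = adj_apply M e A z h - adj_apply M e B z h"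
proof -
  have "adj_apply M e (A - B) z h = (\<integral>\<omega>. z \<omega> * e (A h) \<omega> - z \<omega> * e (B h) \<omega> \<partial>M)"
    unfolding adj_apply_def blinfun.diff_left
    using e_diff[of "A h" "B h"] assms
    by (intro integral_cong_AE)
      (auto simp: right_diff_distrib intro!: borel_measurable_times borel_measurable_diff L2_measurable[OF assms] e_measurable)
  then show ?thesis
    using L2_mult_integrable[OF assms e_L2] by (simp add: adj_apply_def)
qed

lemma adj_apply_tendsto:
  assumes Z: "\<And>j. Z j \<in> L2 M" and z: "z \<in> L2 M"
    and Z_z: "(\<lambda>j. L2norm M (\<lambda>\<omega>. Z j \<omega> - z \<omega>)) \<longlonglongrightarrow> 0" and As_A: "As \<longlonglongrightarrow> A"
  shows "(\<lambda>j. adj_apply M e (As j) (Z j) h) \<longlonglongrightarrow> adj_apply M e A z h"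
proof (rule LIM_zero_cancel, rule Lim_null_comparison)
  define B where "B j = L2norm M (\<lambda>\<omega>. Z j \<omega> - z \<omega>) * C * norm (As j) * norm h
    + L2norm M z * C * norm (As j - A) * norm h" for j
  have "norm (adj_apply M e (As j) (Z j) h - adj_apply M e A z h) \<le> B j" for j
  proof -
    have "adj_apply M e (As j) (Z j) h - adj_apply M e A z h
        = adj_apply M e (As j) (\<lambda>\<omega>. Z j \<omega> - z \<omega>) h + adj_apply M e (As j - A) z h"
      by (simp add: adj_apply_diff_left[OF Z z] adj_apply_diff_right[OF z])
    then have "norm (adj_apply M e (As j) (Z j) h - adj_apply M e A z h)
        \<le> \<bar>adj_apply M e (As j) (\<lambda>\<omega>. Z j \<omega> - z \<omega>) h\<bar> + \<bar>adj_apply M e (As j - A) z h\<bar>"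
      by (simp add: abs_triangle_ineq)
    also have "\<dots> \<le> B j"
      unfolding B_def by (intro add_mono abs_adj_apply_le L2_diff Z z)
    finally show ?thesis .
  qed
  then show "\<forall>\<^sub>F j in sequentially. norm (adj_apply M e (As j) (Z j) h - adj_apply M e A z h) \<le> B j"
    by simp
  have "B \<longlonglongrightarrow> 0 * C * norm A * norm h + L2norm M z * C * norm (A - A) * norm h"
    unfolding B_def by (intro tendsto_intros Z_z As_A)
  then show "B \<longlonglongrightarrow> 0"
    by simp
qed

section \<open>Differentiability of the squared constraint violation\<close>

lemma gplus_L2: "gplus e g u \<in> L2 M"
  unfolding gplus_def by (rule L2_max_0[OF e_L2])

lemma L2norm_gplus_square_remainder_le:
  "\<bar>(L2norm M (gplus e g (u + h)))\<^sup>2 - (L2norm M (gplus e g u))\<^sup>2 - 2 * adj_apply M e G (gplus e g u) h\<bar>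
    \<le> (C * norm (g (u + h) - g u))\<^sup>2 + 2 * (L2norm M (gplus e g u) * C * norm (g (u + h) - g u - G h))"
proof -
  define s where "s = e (g u)"
  define t where "t \<omega> = e (g (u + h)) \<omega> - e (g u) \<omega>" for \<omega>
  define r where "r = g (u + h) - g u - G h"
  have s: "s \<in> L2 M" and t: "t \<in> L2 M"
    unfolding s_def t_def by (auto intro: e_L2 L2_diff)
  have "AE \<omega> in M. t \<omega> = e (G h) \<omega> + e r \<omega>"
    using e_diff[of "g (u + h)" "g u"] e_add[of "G h" r]
    by eventually_elim (simp add: t_def r_def)
  then have "(\<integral>\<omega>. gplus e g u \<omega> * t \<omega> \<partial>M) = (\<integral>\<omega>. gplus e g u \<omega> * e (G h) \<omega> + gplus e g u \<omega> * e r \<omega> \<partial>M)"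
    using t
    by (intro integral_cong_AE) (auto simp: distrib_left
        intro!: borel_measurable_times borel_measurable_add L2_measurable[OF gplus_L2[of g u]] L2_measurable[OF t] e_measurable)
  also have "\<dots> = adj_apply M e G (gplus e g u) h + (\<integral>\<omega>. gplus e g u \<omega> * e r \<omega> \<partial>M)"
    unfolding adj_apply_def using L2_mult_integrable[OF gplus_L2[of g u] e_L2] by simp
  finally have split: "(\<integral>\<omega>. gplus e g u \<omega> * t \<omega> \<partial>M)
      = adj_apply M e G (gplus e g u) h + (\<integral>\<omega>. gplus e g u \<omega> * e r \<omega> \<partial>M)" .
  have "\<bar>\<integral>\<omega>. gplus e g u \<omega> * e r \<omega> \<partial>M\<bar> \<le> L2norm M (gplus e g u) * (C * norm r)"
    by (rule order_trans[OF L2_Cauchy_Schwarz[OF gplus_L2[of g u] e_L2]])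
      (intro mult_left_mono L2norm_e_le L2norm_nonneg)
  moreover have "(L2norm M t)\<^sup>2 \<le> (C * norm (g (u + h) - g u))\<^sup>2"
    unfolding t_def by (intro power_mono L2norm_e_diff_le L2norm_nonneg)
  moreover have "gplus e g (u + h) = (\<lambda>\<omega>. max 0 (s \<omega> + t \<omega>))" "gplus e g u = (\<lambda>\<omega>. max 0 (s \<omega>))"
    by (auto simp: gplus_def s_def t_def)
  ultimately show ?thesis
    using L2norm_max_0_square_expansion_le[OF s t] split unfolding r_def
    by (simp add: mult.assoc)
qed

lemma has_derivative_L2norm_gplus_square:
  fixes G :: "'x::real_normed_vector \<Rightarrow>\<^sub>L 'y"
  assumes g: "(g has_derivative G) (at u)"
  shows "((\<lambda>v. (L2norm M (gplus e g v))\<^sup>2) has_derivative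
      (\<lambda>h. 2 * adj_apply M e G (gplus e g u) h)) (at u)"
proof (rule has_derivative_at_if_remainder_le)
  define S where "S = L2norm M (gplus e g u)"
  define rem where "rem h = norm (g (u + h) - g u - G h)" for h
  define R where "R h = (C * (rem h + norm G * norm h))\<^sup>2 + 2 * (S * C * rem h)" for h
  show "bounded_linear (\<lambda>h. 2 * adj_apply M e G (gplus e g u) h)"
    by (intro bounded_linear_mult_right[THEN bounded_linear_compose] bounded_linear_adj_apply gplus_L2)
  show "norm ((L2norm M (gplus e g (u + h)))\<^sup>2 - (L2norm M (gplus e g u))\<^sup>2 - 2 * adj_apply M e G (gplus e g u) h)
      \<le> R h" for h
  proof -
    have "norm (g (u + h) - g u) \<le> rem h + norm G * norm h"
      unfolding rem_def using norm_triangle_ineq[of "g (u + h) - g u - G h" "G h"] norm_blinfun[of G h]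
      by simp
    then have "(C * norm (g (u + h) - g u))\<^sup>2 \<le> (C * (rem h + norm G * norm h))\<^sup>2"
      using C_nonneg by (intro power_mono mult_left_mono) auto
    then show ?thesis
      using L2norm_gplus_square_remainder_le[of g u h G] unfolding R_def S_def rem_def real_norm_def
      by linarith
  qed
  have rem: "((\<lambda>h. rem h / norm h) \<longlongrightarrow> 0) (at 0)"
    using g unfolding has_derivative_at rem_def by simp
  have "(\<lambda>h. R h / norm h) = (\<lambda>h. C\<^sup>2 * (rem h / norm h + norm G)\<^sup>2 * norm h + 2 * (S * C * (rem h / norm h)))"
    by (auto simp: R_def power2_eq_square field_simps)
  moreover have "((\<lambda>h. C\<^sup>2 * (rem h / norm h + norm G)\<^sup>2 * norm h + 2 * (S * C * (rem h / norm h))) \<longlongrightarrow>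
      C\<^sup>2 * (0 + norm G)\<^sup>2 * norm (0::'x) + 2 * (S * C * 0)) (at 0)"
    by (intro tendsto_intros rem)
  ultimately show "((\<lambda>h. R h / norm h) \<longlongrightarrow> 0) (at 0)"
    by simp
qed

section \<open>Stationarity of limit points\<close>

lemma bounded_linear_AL_deriv:
  assumes "lam \<in> L2 M"
  shows "bounded_linear (AL_deriv M e f' g g' \<rho> x lam)"
proof -
  have "(\<lambda>\<omega>. max 0 (lam \<omega> + \<rho> * e (g x) \<omega>)) \<in> L2 M"
    using assms by (intro L2_max_0 L2_add L2_mult e_L2)
  then show ?thesis
    unfolding AL_deriv_def[abs_def]
    by (intro bounded_linear_add blinfun.bounded_linear_right bounded_linear_adj_apply)
qed

lemma L2norm_max_0_shift_le:
  assumes v: "v \<in> L2 M"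
  shows "L2norm M (\<lambda>\<omega>. max 0 (v \<omega> + e a \<omega>) - max 0 (e b \<omega>)) \<le> L2norm M v + C * norm (a - b)"
proof -
  define d where "d \<omega> = e a \<omega> - e b \<omega>" for \<omega>
  have d: "d \<in> L2 M"
    unfolding d_def by (intro L2_diff e_L2)
  have max_0_diff: "\<bar>max 0 (p + q) - max 0 q'\<bar> \<le> \<bar>\<bar>p\<bar> + \<bar>q - q'\<bar>\<bar>" for p q q' :: real
    by (auto simp: max_def abs_if)
  have "L2norm M (\<lambda>\<omega>. max 0 (v \<omega> + e a \<omega>) - max 0 (e b \<omega>)) \<le> L2norm M (\<lambda>\<omega>. \<bar>v \<omega>\<bar> + \<bar>d \<omega>\<bar>)"
  proof (rule L2norm_mono)
    show "(\<lambda>\<omega>. \<bar>v \<omega>\<bar> + \<bar>d \<omega>\<bar>) \<in> L2 M"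
      by (intro L2_add L2_abs v d)
    show "(\<lambda>\<omega>. max 0 (v \<omega> + e a \<omega>) - max 0 (e b \<omega>)) \<in> borel_measurable M"
      by (intro borel_measurable_diff borel_measurable_max borel_measurable_add
          borel_measurable_const e_measurable L2_measurable[OF v])
    show "AE \<omega> in M. \<bar>max 0 (v \<omega> + e a \<omega>) - max 0 (e b \<omega>)\<bar> \<le> \<bar>\<bar>v \<omega>\<bar> + \<bar>d \<omega>\<bar>\<bar>"
      unfolding d_def by (intro AE_I2 max_0_diff)
  qed
  also have "\<dots> \<le> L2norm M v + L2norm M d"
    using L2norm_triangle[OF L2_abs[OF v] L2_abs[OF d]] by (simp only: L2norm_abs)
  also have "\<dots> \<le> L2norm M v + C * norm (a - b)"
    unfolding d_def using L2norm_e_diff_le by simp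
  finally show ?thesis .
qed

lemma L2norm_max_0_shift_tendsto:
  assumes v: "\<And>j. v j \<in> L2 M" and v_0: "(\<lambda>j. L2norm M (v j)) \<longlonglongrightarrow> 0" and Y: "Y \<longlonglongrightarrow> y"
  shows "(\<lambda>j. L2norm M (\<lambda>\<omega>. max 0 (v j \<omega> + e (Y j) \<omega>) - max 0 (e y \<omega>))) \<longlonglongrightarrow> 0"
proof (rule Lim_null_comparison)
  show "\<forall>\<^sub>F j in sequentially. norm (L2norm M (\<lambda>\<omega>. max 0 (v j \<omega> + e (Y j) \<omega>) - max 0 (e y \<omega>)))
      \<le> L2norm M (v j) + C * norm (Y j - y)"
    using L2norm_max_0_shift_le[OF v] by (simp add: L2norm_nonneg always_eventually)
  have "(\<lambda>j. L2norm M (v j) + C * norm (Y j - y)) \<longlonglongrightarrow> 0 + C * norm (y - y)"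
    by (intro tendsto_intros v_0 Y)
  then show "(\<lambda>j. L2norm M (v j) + C * norm (Y j - y)) \<longlonglongrightarrow> 0"
    by simp
qed

lemma L2norm_gplus_eq_0_if_complementarity_tendsto_0:
  assumes \<Phi>_cont: "isCont (\<lambda>u. (L2norm M (gplus e g u))\<^sup>2) xbar"
    and v: "\<And>k. v k \<in> L2 M" "\<And>k. AE \<omega> in M. 0 \<le> v k \<omega>"
    and residual: "(\<lambda>k. L2norm M (\<lambda>\<omega>. min (- e (g (y k)) \<omega>) (v k \<omega>))) \<longlonglongrightarrow> 0"
    and r: "strict_mono r" and y_r: "(\<lambda>j. y (r j)) \<longlonglongrightarrow> xbar"
  shows "L2norm M (gplus e g xbar) = 0"
proof -
  have "(\<lambda>k. L2norm M (gplus e g (y k))) \<longlonglongrightarrow> 0"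
  proof (rule Lim_null_comparison[OF _ residual])
    have "L2norm M (gplus e g (y k)) \<le> L2norm M (\<lambda>\<omega>. min (- e (g (y k)) \<omega>) (v k \<omega>))" for k
      unfolding gplus_def using e_L2 v by (rule L2norm_max_0_le_L2norm_min)
    then show "\<forall>\<^sub>F k in sequentially. norm (L2norm M (gplus e g (y k)))
        \<le> L2norm M (\<lambda>\<omega>. min (- e (g (y k)) \<omega>) (v k \<omega>))"
      by (simp add: L2norm_nonneg always_eventually)
  qed
  then have "(\<lambda>j. (L2norm M (gplus e g (y (r j))))\<^sup>2) \<longlonglongrightarrow> 0\<^sup>2"
    using LIMSEQ_subseq_LIMSEQ[OF _ r] unfolding o_def by (intro tendsto_power)
  moreover have "(\<lambda>j. (L2norm M (gplus e g (y (r j))))\<^sup>2) \<longlonglongrightarrow> (L2norm M (gplus e g xbar))\<^sup>2"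
    using isCont_tendsto_compose[OF \<Phi>_cont y_r] .
  ultimately have "0\<^sup>2 = (L2norm M (gplus e g xbar))\<^sup>2"
    by (rule LIMSEQ_unique)
  then show ?thesis
    by simp
qed

lemma L2norm_gplus_eq_0_if_penalty_eventually_constant:
  assumes \<Phi>_cont: "isCont (\<lambda>u. (L2norm M (gplus e g u))\<^sup>2) xbar"
    and w: "\<And>k. w k \<in> L2 M" "\<And>k. AE \<omega> in M. 0 \<le> w k \<omega>"
    and \<rho>: "\<And>k. 0 < \<rho> k" and \<gamma>: "1 < \<gamma>" and \<tau>: "\<tau> < 1"
    and update: "\<And>k. \<rho> (Suc k) =
      (if k = 0 \<or>
          L2norm M (\<lambda>\<omega>. min (- e (g (x (Suc k))) \<omega>) (w k \<omega> / \<rho> k))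
            \<le> \<tau> * L2norm M (\<lambda>\<omega>. min (- e (g (x k)) \<omega>) (w (k - 1) \<omega> / \<rho> (k - 1)))
       then \<rho> k else \<gamma> * \<rho> k)"
    and const: "\<exists>K. \<forall>k\<ge>K. \<rho> (Suc k) = \<rho> k"
    and r: "strict_mono r" and x_r: "(\<lambda>j. x (r j)) \<longlonglongrightarrow> xbar"
  shows "L2norm M (gplus e g xbar) = 0"
proof -
  define V where "V k = L2norm M (\<lambda>\<omega>. min (- e (g (x k)) \<omega>) (w (k - 1) \<omega> / \<rho> (k - 1)))" for k
  have "\<forall>\<^sub>F k in sequentially. V (Suc k) \<le> \<tau> * V k"
    by (rule eventually_contracting_if_penalty_eventually_constant[OF _ \<gamma> \<rho> const])
      (simp add: V_def update)
  then have "V \<longlonglongrightarrow> 0"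
    using \<tau> by (intro tendsto_0_if_eventually_contracting) (simp_all add: V_def L2norm_nonneg)
  moreover have "AE \<omega> in M. 0 \<le> w k \<omega> / \<rho> k" for k
    using w(2)[of k] \<rho>[of k] by (auto elim!: AE_mp)
  ultimately show ?thesis
    unfolding V_def using \<Phi>_cont r x_r
    by (intro L2norm_gplus_eq_0_if_complementarity_tendsto_0[where v = "\<lambda>k \<omega>. w (k - 1) \<omega> / \<rho> (k - 1)"]
        L2_divide w) auto
qed

lemma adj_apply_gplus_eq_0_if_penalty_unbounded:
  assumes cont: "isCont f' xbar" "isCont g xbar" "isCont g' xbar"
    and wmax: "wmax \<in> L2 M"
    and w: "\<And>k. w k \<in> L2 M" "\<And>k. AE \<omega> in M. 0 \<le> w k \<omega> \<and> w k \<omega> \<le> wmax \<omega>"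
    and \<rho>: "\<And>k. 0 < \<rho> k" "filterlim \<rho> at_top sequentially"
    and stationary: "(\<lambda>k. dual_norm (AL_deriv M e f' g g' (\<rho> k) (y k) (w k))) \<longlonglongrightarrow> 0"
    and s: "strict_mono s" and y_s: "(\<lambda>j. y (s j)) \<longlonglongrightarrow> xbar"
  shows "adj_apply M e (g' xbar) (gplus e g xbar) h = 0"
proof -
  define Z where "Z j = (\<lambda>\<omega>. max 0 (w (s j) \<omega> / \<rho> (s j) + e (g (y (s j))) \<omega>))" for j
  have Z: "Z j \<in> L2 M" for j
    unfolding Z_def by (intro L2_max_0 L2_add L2_divide w e_L2)
  have inv_\<rho>: "(\<lambda>j. inverse (\<rho> (s j))) \<longlonglongrightarrow> 0"
    by (intro tendsto_inverse_0_at_top filterlim_compose[OF \<rho>(2) filterlim_subseq[OF s]])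
  have "(\<lambda>j. AL_deriv M e f' g g' (\<rho> (s j)) (y (s j)) (w (s j)) h) \<longlonglongrightarrow> 0"
    using LIMSEQ_subseq_LIMSEQ[OF stationary s] bounded_linear_AL_deriv[OF w(1)] unfolding o_def
    by (rule tendsto_0_if_dual_norm_tendsto_0[where \<phi> = "\<lambda>j. AL_deriv M e f' g g' (\<rho> (s j)) (y (s j)) (w (s j))",
          rotated])
  txt \<open>Dividing the stationarity condition by the penalty parameter isolates the constraint term.\<close>
  then have "(\<lambda>j. AL_deriv M e f' g g' (\<rho> (s j)) (y (s j)) (w (s j)) h * inverse (\<rho> (s j))
      - f' (y (s j)) h * inverse (\<rho> (s j))) \<longlonglongrightarrow> 0 * 0 - f' xbar h * 0"
    by (intro tendsto_diff tendsto_mult inv_\<rho> tendsto_const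
        blinfun.tendsto[OF isCont_tendsto_compose[OF cont(1) y_s]])
  moreover have "adj_apply M e (g' (y (s j))) (Z j) h
      = AL_deriv M e f' g g' (\<rho> (s j)) (y (s j)) (w (s j)) h * inverse (\<rho> (s j))
        - f' (y (s j)) h * inverse (\<rho> (s j))" for j
    unfolding Z_def divide_inverse[symmetric] AL_deriv_divide[OF \<rho>(1)] by simp
  ultimately have "(\<lambda>j. adj_apply M e (g' (y (s j))) (Z j) h) \<longlonglongrightarrow> 0"
    by simp
  moreover have "(\<lambda>j. L2norm M (\<lambda>\<omega>. Z j \<omega> - gplus e g xbar \<omega>)) \<longlonglongrightarrow> 0"
    unfolding Z_def gplus_def using w \<rho>(1) inv_\<rho>
    by (intro L2norm_max_0_shift_tendsto L2_divide L2norm_divide_tendsto_0[OF wmax]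
        isCont_tendsto_compose[OF cont(2) y_s]) (auto intro: L2_measurable)
  then have "(\<lambda>j. adj_apply M e (g' (y (s j))) (Z j) h) \<longlonglongrightarrow> adj_apply M e (g' xbar) (gplus e g xbar) h"
    by (intro adj_apply_tendsto Z gplus_L2 isCont_tendsto_compose[OF cont(3) y_s])
  ultimately show ?thesis
    using LIMSEQ_unique by blast
qed

end

theorem theorem6p2:
  fixes M :: "'w measure"
    and e :: "'y::banach \<Rightarrow> ('w \<Rightarrow> real)"
    and f :: "'x::banach \<Rightarrow> real" and f' :: "'x \<Rightarrow> 'x \<Rightarrow>\<^sub>L real"
    and g :: "'x \<Rightarrow> 'y" and g' :: "'x \<Rightarrow> 'x \<Rightarrow>\<^sub>L 'y"
    and x :: "nat \<Rightarrow> 'x" and lam w :: "nat \<Rightarrow> 'w \<Rightarrow> real" and \<rho> :: "nat \<Rightarrow> real"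
    and wmax :: "'w \<Rightarrow> real" and \<gamma> \<tau> :: real and xbar :: 'x
  assumes emb: "dense_embedding M e"
    and f_deriv: "\<And>u. (f has_derivative blinfun_apply (f' u)) (at u)"
    and f'_cont: "continuous_on UNIV f'"
    and g_deriv: "\<And>u. (g has_derivative blinfun_apply (g' u)) (at u)"
    and g'_cont: "continuous_on UNIV g'"
    and lam0: "lam 0 \<in> L2 M"
    and rho0: "\<rho> 0 > 0"
    and wmax: "wmax \<in> L2 M" "AE \<omega> in M. 0 \<le> wmax \<omega>"
    and gamma: "\<gamma> > 1"
    and tau: "0 < \<tau>" "\<tau> < 1"
    and w_L2: "\<And>k. w k \<in> L2 M"
    and w_bnd: "\<And>k. AE \<omega> in M. 0 \<le> w k \<omega> \<and> w k \<omega> \<le> wmax \<omega>"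
    and approx_min: "(\<lambda>k. dual_norm (AL_deriv M e f' g g' (\<rho> k) (x (Suc k)) (w k)))
                        \<longlonglongrightarrow> 0"
    and lam_upd: "\<And>k. lam (Suc k) = (\<lambda>\<omega>. max 0 (w k \<omega> + \<rho> k * e (g (x (Suc k))) \<omega>))"
    and rho_upd: "\<And>k. \<rho> (Suc k) =
        (if k = 0 \<or>
            L2norm M (\<lambda>\<omega>. min (- e (g (x (Suc k))) \<omega>) (w k \<omega> / \<rho> k))
              \<le> \<tau> * L2norm M (\<lambda>\<omega>. min (- e (g (x k)) \<omega>) (w (k - 1) \<omega> / \<rho> (k - 1)))
         then \<rho> k else \<gamma> * \<rho> k)"
    and limpt: "\<exists>r. strict_mono r \<and> (x \<circ> r) \<longlonglongrightarrow> xbar"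
  shows "((\<lambda>u. (L2norm M (gplus e g u))\<^sup>2) has_derivative
            (\<lambda>h. 2 * adj_apply M e (g' xbar) (gplus e g xbar) h)) (at xbar)
         \<and> (\<forall>h. 2 * adj_apply M e (g' xbar) (gplus e g xbar) h = 0)"
proof -
  \<comment> \<open>Neither the multipliers \<open>lam\<close> nor \<open>f\<close> itself (only \<open>f'\<close>) enter the argument.\<close>
  obtain C where "bounded_L2_map M e C"
    using emb by (rule dense_embedding_imp_bounded_L2_map)
  then interpret bounded_L2_map M e C .
  have deriv: "((\<lambda>u. (L2norm M (gplus e g u))\<^sup>2) has_derivative
      (\<lambda>h. 2 * adj_apply M e (g' xbar) (gplus e g xbar) h)) (at xbar)"
    by (rule has_derivative_L2norm_gplus_square[OF g_deriv])
  have \<rho>_step: "\<rho> (Suc k) = \<rho> k \<or> \<rho> (Suc k) = \<gamma> * \<rho> k" for k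
    by (simp add: rho_upd)
  have \<rho>_pos: "0 < \<rho> k" for k
    using rho0 gamma \<rho>_step by (rule penalty_pos)
  obtain r where r: "strict_mono r" "(\<lambda>j. x (r j)) \<longlonglongrightarrow> xbar"
    using limpt by (auto simp: o_def)
  have "adj_apply M e (g' xbar) (gplus e g xbar) h = 0" for h
  proof (cases "\<exists>K. \<forall>k\<ge>K. \<rho> (Suc k) = \<rho> k")
    case True
    have w_nonneg: "AE \<omega> in M. 0 \<le> w k \<omega>" for k
      using w_bnd[of k] by eventually_elim simp
    have "L2norm M (gplus e g xbar) = 0"
      by (rule L2norm_gplus_eq_0_if_penalty_eventually_constant[OF has_derivative_continuous[OF deriv]
            w_L2 w_nonneg \<rho>_pos gamma tau(2) rho_upd True r])
    then show ?thesis
      by (intro adj_apply_eq_0 gplus_L2)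
  next
    case False
    then have "filterlim \<rho> at_top sequentially"
      using penalty_eventually_constant_or_unbounded[OF rho0 gamma \<rho>_step] by blast
    moreover obtain s where "strict_mono s" "(\<lambda>j. x (Suc (s j))) \<longlonglongrightarrow> xbar"
      using r by (rule limit_point_Suc[unfolded o_def])
    ultimately show ?thesis
      using f'_cont g'_cont has_derivative_continuous[OF g_deriv] wmax(1) w_L2 w_bnd \<rho>_pos approx_min
      by (intro adj_apply_gplus_eq_0_if_penalty_unbounded[where y = "\<lambda>k. x (Suc k)"])
        (auto simp: continuous_on_eq_continuous_at)
  qed
  with deriv show ?thesis
    by simp
qed

end
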